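(* Every graph $G$ satisfies $\mathrm{cop}(G)\le \mathrm{tw}(G)/2+1$.
   Context: All graphs are finite, undirected, without loops or multiple edges. A tree decomposition of $G$ is a pair $(T,\{W_x: x\in V(T)\})$ with $T$ a tree and $W_x\subseteq V(G)$ such that $\bigcup_x W_x=V(G)$, every edge of $G$ has both ends in some $W_x$, and for each $u\in V(G)$ the set $\{x: u\in W_x\}$ induces a subtree of $T$; its width is $\max_x |W_x|-1$, and $\mathrm{tw}(G)$ is the minimum width of a tree decomposition of $G$. Cops and Robber game on a connected graph: for an integer $k\ge 1$, the cop player places $k$ cops on (not necessarily distinct) vertices, then the robber is placed on a vertex; then, starting with the cops, the players alternate moves. In a cop move, each cop either stays or moves to an adjacent vertex; in a robber move, the robber stays or moves to an adjacent vertex. The cops win if at some point a cop and the robber occupy the same vertex. Both players have complete information. The cop number $\mathrm{cop}(G)$ of a connected graph $G$ is the smallest $k$ such that the cops have a winning strategy with $k$ cops; for a non-connected graph it is the maximum cop number of its connected components. *)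

theory Defs
  imports Complex_Main
begin

definition simple_graph :: "'a set \<Rightarrow> ('a \<Rightarrow> 'a \<Rightarrow> bool) \<Rightarrow> bool" where
  "simple_graph V E \<longleftrightarrow> finite V \<and> (\<forall>x y. E x y \<longrightarrow> x \<in> V \<and> y \<in> V)
     \<and> (\<forall>x y. E x y \<longrightarrow> E y x) \<and> (\<forall>x. \<not> E x x)"

definition restrict_adj :: "'a set \<Rightarrow> ('a \<Rightarrow> 'a \<Rightarrow> bool) \<Rightarrow> 'a \<Rightarrow> 'a \<Rightarrow> bool" where
  "restrict_adj S E = (\<lambda>x y. E x y \<and> x \<in> S \<and> y \<in> S)"

definition connected_on :: "'a set \<Rightarrow> ('a \<Rightarrow> 'a \<Rightarrow> bool) \<Rightarrow> bool" where
  "connected_on S E \<longleftrightarrow> (\<forall>x\<in>S. \<forall>y\<in>S. (restrict_adj S E)\<^sup>*\<^sup>* x y)"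

definition is_cycle :: "'a set \<Rightarrow> ('a \<Rightarrow> 'a \<Rightarrow> bool) \<Rightarrow> 'a list \<Rightarrow> bool" where
  "is_cycle V E cs \<longleftrightarrow> length cs \<ge> 3 \<and> distinct cs \<and> set cs \<subseteq> V
     \<and> (\<forall>i. Suc i < length cs \<longrightarrow> E (cs ! i) (cs ! Suc i))
     \<and> E (last cs) (hd cs)"

definition is_tree :: "'b set \<Rightarrow> ('b \<Rightarrow> 'b \<Rightarrow> bool) \<Rightarrow> bool" where
  "is_tree I F \<longleftrightarrow> simple_graph I F \<and> I \<noteq> {} \<and> connected_on I F
     \<and> (\<nexists>cs. is_cycle I F cs)"

definition tree_decomposition ::
  "'a set \<Rightarrow> ('a \<Rightarrow> 'a \<Rightarrow> bool) \<Rightarrow> 'b set \<Rightarrow> ('b \<Rightarrow> 'b \<Rightarrow> bool) \<Rightarrow> ('b \<Rightarrow> 'a set) \<Rightarrow> bool" where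
  "tree_decomposition V E I F W \<longleftrightarrow>
     is_tree I F
     \<and> (\<forall>x\<in>I. W x \<subseteq> V)
     \<and> (\<Union>x\<in>I. W x) = V
     \<and> (\<forall>u v. E u v \<longrightarrow> (\<exists>x\<in>I. u \<in> W x \<and> v \<in> W x))
     \<and> (\<forall>u\<in>V. connected_on {x\<in>I. u \<in> W x} F)"

definition td_width :: "'b set \<Rightarrow> ('b \<Rightarrow> 'a set) \<Rightarrow> int" where
  "td_width I W = int (Max ((\<lambda>x. card (W x)) ` I)) - 1"

(* treewidth; the decomposition trees are taken with nodes in nat (every finite
   tree is isomorphic to one with nodes in nat) *)
definition treewidth :: "'a set \<Rightarrow> ('a \<Rightarrow> 'a \<Rightarrow> bool) \<Rightarrow> int" where
  "treewidth V E = (LEAST w. \<exists>(I::nat set) F W. tree_decomposition V E I F W \<and> w = td_width I W)"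

definition step_ok :: "('a \<Rightarrow> 'a \<Rightarrow> bool) \<Rightarrow> 'a \<Rightarrow> 'a \<Rightarrow> bool" where
  "step_ok E x y \<longleftrightarrow> x = y \<or> E x y"

(* A cop strategy sigma maps the list of robber positions observed so far to the
   positions of the cops: sigma [] is the initial placement; after the robber has
   occupied r_0,...,r_{n-1} (r_0 his initial position, r_j his position after his
   j-th move) the cops move to sigma [r_0,...,r_{n-1}]. Since the cop strategy is deterministic,
   quantifying over all such sequences is the same as quantifying over all robber
   strategies. The robber is caught if at some point a cop and the robber share a
   vertex: either right after the robber's n-th placement/move (cops at
   sigma [r_0..r_{n-1}]) or right after the cops' reply (cops at sigma [r_0..r_n]). *)
definition cop_strategy :: "'a set \<Rightarrow> ('a \<Rightarrow> 'a \<Rightarrow> bool) \<Rightarrow> nat \<Rightarrow> ('a list \<Rightarrow> nat \<Rightarrow> 'a) \<Rightarrow> bool" where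
  "cop_strategy V E k \<sigma> \<longleftrightarrow>
     (\<forall>rs. set rs \<subseteq> V \<longrightarrow> (\<forall>i<k. \<sigma> rs i \<in> V))
     \<and> (\<forall>rs r. set rs \<subseteq> V \<and> r \<in> V \<longrightarrow>
          (\<forall>i<k. step_ok (restrict_adj V E) (\<sigma> rs i) (\<sigma> (rs @ [r]) i)))"

definition robber_play :: "'a set \<Rightarrow> ('a \<Rightarrow> 'a \<Rightarrow> bool) \<Rightarrow> (nat \<Rightarrow> 'a) \<Rightarrow> bool" where
  "robber_play V E r \<longleftrightarrow> r 0 \<in> V \<and> (\<forall>n. step_ok (restrict_adj V E) (r n) (r (Suc n)))"

definition caught :: "nat \<Rightarrow> ('a list \<Rightarrow> nat \<Rightarrow> 'a) \<Rightarrow> (nat \<Rightarrow> 'a) \<Rightarrow> bool" where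
  "caught k \<sigma> r \<longleftrightarrow> (\<exists>n. \<exists>i<k.
      \<sigma> (map r [0..<n]) i = r n \<or> \<sigma> (map r [0..<Suc n]) i = r n)"

definition cops_win :: "'a set \<Rightarrow> ('a \<Rightarrow> 'a \<Rightarrow> bool) \<Rightarrow> nat \<Rightarrow> bool" where
  "cops_win V E k \<longleftrightarrow> (\<exists>\<sigma>. cop_strategy V E k \<sigma> \<and>
      (\<forall>r. robber_play V E r \<longrightarrow> caught k \<sigma> r))"

definition cop_number_conn :: "'a set \<Rightarrow> ('a \<Rightarrow> 'a \<Rightarrow> bool) \<Rightarrow> nat" where
  "cop_number_conn V E = (LEAST k. k \<ge> 1 \<and> cops_win V E k)"

definition component_of :: "'a set \<Rightarrow> ('a \<Rightarrow> 'a \<Rightarrow> bool) \<Rightarrow> 'a \<Rightarrow> 'a set" where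
  "component_of V E v = {u\<in>V. (restrict_adj V E)\<^sup>*\<^sup>* v u}"

definition components :: "'a set \<Rightarrow> ('a \<Rightarrow> 'a \<Rightarrow> bool) \<Rightarrow> 'a set set" where
  "components V E = component_of V E ` V"

definition cop_number :: "'a set \<Rightarrow> ('a \<Rightarrow> 'a \<Rightarrow> bool) \<Rightarrow> nat" where
  "cop_number V E = Max ((\<lambda>C. cop_number_conn C (restrict_adj C E)) ` components V E)"

end

theory Submission
  imports Defs "HOL-Library.Product_Lexorder"
begin

text \<open>Let \<open>k = \<lfloor>tw/2\<rfloor> + 1\<close>, so that every bag of an optimal tree decomposition has at most
  \<open>2k\<close> vertices. The cops keep the robber inside a connected region \<open>D\<close> whose boundary \<open>N(D)\<close>
  lies in one bag and is shared out among them; a cop guards his share by shadowing the robber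
  along a walk, through a 1-Lipschitz projection of the robber's position onto the walk.
  Moving through the tree towards \<open>D\<close> yields a bag containing \<open>N(D)\<close> and some \<open>x \<in> D\<close>, so
  \<open>|N(D)| < 2k\<close> and some cop guards at most one vertex \<open>z\<close>. That cop walks to \<open>z\<close> and then
  sweeps back along a shortest path from \<open>z\<close> to \<open>x\<close>, after which he guards both ends and the
  robber is confined to his component of \<open>D - x\<close>. The lexicographic rank (\<open>|D|\<close>, phase, distance)
  drops in every round in which the robber escapes, so he is caught.\<close>

section \<open>Winning by a decreasing rank\<close>

lemma finite_uniform_bound:
  fixes Q :: "nat \<Rightarrow> 'b \<Rightarrow> bool"
  assumes "finite S" and "\<forall>s\<in>S. \<exists>n. Q n s" and "\<And>n n' s. Q n s \<Longrightarrow> n \<le> n' \<Longrightarrow> Q n' s"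
  shows "\<exists>N. \<forall>s\<in>S. Q N s"
proof -
  obtain n where n: "\<forall>s\<in>S. Q (n s) s" using assms(2) by metis
  have "\<forall>s\<in>S. n s \<le> Max (n ` S)" using assms(1) by simp
  then show ?thesis using n assms(3) by blast
qed

locale cops_robber_game =
  fixes V :: "'a set" and E :: "'a \<Rightarrow> 'a \<Rightarrow> bool" and k :: nat
  assumes finite_vertices: "finite V"
begin

abbreviation moves :: "'a \<Rightarrow> 'a \<Rightarrow> bool" where
  "moves \<equiv> step_ok (restrict_adj V E)"

definition cops_move :: "(nat \<Rightarrow> 'a) \<Rightarrow> (nat \<Rightarrow> 'a) \<Rightarrow> bool" where
  "cops_move c c' \<longleftrightarrow> (\<forall>i<k. c' i \<in> V \<and> moves (c i) (c' i))"

definition catches :: "(nat \<Rightarrow> 'a) \<Rightarrow> 'a \<Rightarrow> bool" where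
  "catches c r \<longleftrightarrow> (\<exists>i<k. c i = r)"

primrec win_robber_turn :: "nat \<Rightarrow> (nat \<Rightarrow> 'a) \<Rightarrow> 'a \<Rightarrow> bool" where
  "win_robber_turn 0 c r = catches c r"
| "win_robber_turn (Suc n) c r = (catches c r \<or> (\<forall>r'. moves r r' \<longrightarrow>
      catches c r' \<or> (\<exists>c'. cops_move c c' \<and> win_robber_turn n c' r')))"

definition win_cops_turn :: "nat \<Rightarrow> (nat \<Rightarrow> 'a) \<Rightarrow> 'a \<Rightarrow> bool" where
  "win_cops_turn n c r \<longleftrightarrow> catches c r \<or> (\<exists>c'. cops_move c c' \<and> win_robber_turn n c' r)"

lemma win_robber_turn_mono: "win_robber_turn n c r \<Longrightarrow> n \<le> n' \<Longrightarrow> win_robber_turn n' c r"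
proof (induction n arbitrary: n' c r)
  case 0
  then show ?case by (cases n') auto
next
  case (Suc n)
  then obtain n'' where n'': "n' = Suc n''" and "n \<le> n''" by (cases n') auto
  from Suc.prems(1) show ?case
    unfolding n'' win_robber_turn.simps using Suc.IH[OF _ \<open>n \<le> n''\<close>] by blast
qed

lemma win_cops_turn_mono: "win_cops_turn n c r \<Longrightarrow> n \<le> n' \<Longrightarrow> win_cops_turn n' c r"
  unfolding win_cops_turn_def by (auto intro: win_robber_turn_mono)

lemma finite_moves: "finite (Collect (moves r))"
  by (rule finite_subset[of _ "insert r V"]) (auto simp: step_ok_def restrict_adj_def finite_vertices)

definition can_lower_rank ::
  "('w::ord \<Rightarrow> (nat \<Rightarrow> 'a) \<Rightarrow> 'a \<Rightarrow> bool) \<Rightarrow> 'w \<Rightarrow> (nat \<Rightarrow> 'a) \<Rightarrow> 'a \<Rightarrow> bool" where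
  "can_lower_rank P w c r \<longleftrightarrow> (\<exists>c'. cops_move c c' \<and> (catches c' r \<or>
     (\<forall>r'. moves r r' \<longrightarrow> catches c' r' \<or> (\<exists>w'<w. P w' c' r'))))"

lemma can_lower_rankI:
  assumes "cops_move c c'" and "catches c' r \<or> (\<forall>r'. moves r r' \<longrightarrow> (\<exists>w'<w. P w' c' r'))"
  shows "can_lower_rank P w c r"
  using assms unfolding can_lower_rank_def by blast

lemma can_lower_rank_mono:
  "can_lower_rank P w c r \<Longrightarrow> w \<le> w' \<Longrightarrow> can_lower_rank P w' c r"
  for w w' :: "'w::preorder"
  unfolding can_lower_rank_def by (meson order_less_le_trans)

lemma win_cops_turn_by_ranking:
  fixes P :: "'w::wellorder \<Rightarrow> (nat \<Rightarrow> 'a) \<Rightarrow> 'a \<Rightarrow> bool"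
  assumes step: "\<And>w c r. P w c r \<Longrightarrow> can_lower_rank P w c r"
  shows "P w c r \<Longrightarrow> \<exists>n. win_cops_turn n c r"
proof (induction w arbitrary: c r rule: less_induct)
  case (less w)
  obtain c' where move: "cops_move c c'" and alt: "catches c' r \<or>
      (\<forall>r'. moves r r' \<longrightarrow> catches c' r' \<or> (\<exists>w'<w. P w' c' r'))"
    using step[OF less.prems] unfolding can_lower_rank_def by blast
  show ?case
  proof (cases "catches c' r")
    case True
    then have "win_cops_turn 0 c r" using move by (auto simp: win_cops_turn_def)
    then show ?thesis ..
  next
    case False
    then have "\<forall>s\<in>Collect (moves r). \<exists>n. catches c' s \<or> win_cops_turn n c' s"
      using alt less.IH by blast
    then obtain N where "\<forall>s\<in>Collect (moves r). catches c' s \<or> win_cops_turn N c' s"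
      using finite_uniform_bound[OF finite_moves, where Q="\<lambda>n s. catches c' s \<or> win_cops_turn n c' s"]
        win_cops_turn_mono by blast
    then have "win_robber_turn (Suc N) c' r" by (auto simp: win_cops_turn_def)
    then have "win_cops_turn (Suc N) c r" using move by (auto simp: win_cops_turn_def)
    then show ?thesis ..
  qed
qed

text \<open>Replying with a move that minimises the number of rounds still needed turns the positional
  notion of winning into one strategy that catches every robber play.\<close>

definition best_reply :: "(nat \<Rightarrow> 'a) \<Rightarrow> 'a \<Rightarrow> nat \<Rightarrow> 'a" where
  "best_reply c r = (if \<exists>c' n. cops_move c c' \<and> win_robber_turn n c' r
     then SOME c'. cops_move c c' \<and>
       win_robber_turn (LEAST n. \<exists>c'. cops_move c c' \<and> win_robber_turn n c' r) c' r
     else c)"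

definition best_strategy :: "(nat \<Rightarrow> 'a) \<Rightarrow> 'a list \<Rightarrow> nat \<Rightarrow> 'a" where
  "best_strategy c0 rs = fold (\<lambda>r c. best_reply c r) rs c0"

lemma best_strategy_snoc: "best_strategy c0 (rs @ [r]) = best_reply (best_strategy c0 rs) r"
  by (simp add: best_strategy_def)

lemma best_reply_wins:
  assumes "cops_move c c'" and "win_robber_turn n c' r"
  shows "cops_move c (best_reply c r) \<and> (\<exists>N\<le>n. win_robber_turn N (best_reply c r) r)"
proof -
  let ?P = "\<lambda>n. \<exists>c'. cops_move c c' \<and> win_robber_turn n c' r"
  have ex: "?P (LEAST n. ?P n)" and le: "(LEAST n. ?P n) \<le> n"
    using assms by (auto intro: LeastI Least_le)
  have "cops_move c (best_reply c r) \<and> win_robber_turn (LEAST n. ?P n) (best_reply c r) r"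
    unfolding best_reply_def using assms someI_ex[OF ex] by auto
  with le show ?thesis by blast
qed

lemma cops_move_best_reply:
  assumes "\<forall>i<k. c i \<in> V"
  shows "cops_move c (best_reply c r)"
proof (cases "\<exists>c' n. cops_move c c' \<and> win_robber_turn n c' r")
  case True
  then show ?thesis using best_reply_wins by blast
next
  case False
  then have "best_reply c r = c" unfolding best_reply_def by (rule if_not_P)
  then show ?thesis using assms by (simp add: cops_move_def step_ok_def)
qed

lemma best_strategy_in_vertices:
  assumes "\<forall>i<k. c0 i \<in> V"
  shows "\<forall>i<k. best_strategy c0 rs i \<in> V"
proof (induction rs rule: rev_induct)
  case Nil
  then show ?case using assms by (simp add: best_strategy_def)
next
  case (snoc r rs)
  then show ?case using cops_move_best_reply[OF snoc] by (simp add: best_strategy_snoc cops_move_def)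
qed

lemma cop_strategy_best_strategy:
  assumes "\<forall>i<k. c0 i \<in> V"
  shows "cop_strategy V E k (best_strategy c0)"
  using best_strategy_in_vertices[OF assms] cops_move_best_reply[OF best_strategy_in_vertices[OF assms]]
  by (auto simp: cop_strategy_def best_strategy_snoc cops_move_def)

lemma best_strategy_catches:
  assumes "robber_play V E r" and "\<forall>i<k. c0 i \<in> V"
    and "win_cops_turn n (best_strategy c0 (map r [0..<j])) (r j)"
  shows "caught k (best_strategy c0) r"
  using assms(3)
proof (induction n arbitrary: j rule: less_induct)
  case (less n)
  let ?c = "best_strategy c0 (map r [0..<j])" and ?c' = "best_strategy c0 (map r [0..<Suc j])"
  have reply: "?c' = best_reply ?c (r j)" by (simp add: best_strategy_snoc)
  show ?case
  proof (cases "catches ?c (r j)")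
    case True
    then show ?thesis unfolding caught_def catches_def by blast
  next
    case False
    then obtain c' where "cops_move ?c c'" "win_robber_turn n c' (r j)"
      using less.prems by (auto simp: win_cops_turn_def)
    then obtain N where "N \<le> n" and win: "win_robber_turn N ?c' (r j)"
      using best_reply_wins unfolding reply by blast
    show ?thesis
    proof (cases "catches ?c' (r j) \<or> catches ?c' (r (Suc j))")
      case True
      then show ?thesis unfolding caught_def catches_def by blast
    next
      case False
      then obtain N' where N': "N = Suc N'" using win by (cases N) auto
      have "moves (r j) (r (Suc j))" using assms(1) by (simp add: robber_play_def)
      then have "win_cops_turn N' ?c' (r (Suc j))"
        using win False unfolding N' win_cops_turn_def by auto
      moreover have "N' < n" using \<open>N \<le> n\<close> N' by simp
      ultimately show ?thesis using less.IH by blast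
    qed
  qed
qed

lemma cops_win_if_win_cops_turn:
  assumes "\<forall>i<k. c0 i \<in> V" and "\<forall>r0\<in>V. \<exists>n. win_cops_turn n c0 r0"
  shows "cops_win V E k"
  unfolding cops_win_def
proof (intro exI conjI allI impI)
  show "cop_strategy V E k (best_strategy c0)" using cop_strategy_best_strategy[OF assms(1)] .
  fix r assume r: "robber_play V E r"
  then obtain n where "win_cops_turn n c0 (r 0)" using assms(2) by (auto simp: robber_play_def)
  then show "caught k (best_strategy c0) r"
    using best_strategy_catches[OF r assms(1), of n 0] by (simp add: best_strategy_def)
qed

end

section \<open>Paths, components and trees\<close>

lemma rtranclp_restrict_adj_mono:
  "S \<subseteq> T \<Longrightarrow> (restrict_adj S E)\<^sup>*\<^sup>* x y \<Longrightarrow> (restrict_adj T E)\<^sup>*\<^sup>* x y"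
  by (rule mono_rtranclp[rule_format, of "restrict_adj S E"]) (auto simp: restrict_adj_def)

lemma rtranclp_restrict_adj_sym:
  assumes "\<forall>x y. E x y \<longrightarrow> E y x"
  shows "(restrict_adj S E)\<^sup>*\<^sup>* x y \<Longrightarrow> (restrict_adj S E)\<^sup>*\<^sup>* y x"
proof (induction rule: rtranclp_induct)
  case (step y z)
  then have "restrict_adj S E z y" using assms by (auto simp: restrict_adj_def)
  then show ?case using step.IH by (rule converse_rtranclp_into_rtranclp)
qed simp

lemma component_of_subset: "component_of S E r \<subseteq> S"
  by (auto simp: component_of_def)

lemma in_component_of_self: "r \<in> S \<Longrightarrow> r \<in> component_of S E r"
  by (auto simp: component_of_def)

lemma rtranclp_within_component_of:
  assumes "r \<in> S"
  shows "(restrict_adj S E)\<^sup>*\<^sup>* r v \<Longrightarrow> (restrict_adj (component_of S E r) E)\<^sup>*\<^sup>* r v"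
proof (induction rule: rtranclp_induct)
  case (step b c)
  then have "b \<in> component_of S E r" "c \<in> component_of S E r"
    using assms by (auto simp: component_of_def restrict_adj_def intro: rtranclp.rtrancl_into_rtrancl)
  then have "restrict_adj (component_of S E r) E b c" using step(2) by (auto simp: restrict_adj_def)
  with step.IH show ?case by (rule rtranclp.rtrancl_into_rtrancl)
qed simp

lemma connected_on_component_of:
  assumes "\<forall>x y. E x y \<longrightarrow> E y x" and "r \<in> S"
  shows "connected_on (component_of S E r) E"
  unfolding connected_on_def
proof (intro ballI)
  fix x y assume "x \<in> component_of S E r" "y \<in> component_of S E r"
  then have "(restrict_adj (component_of S E r) E)\<^sup>*\<^sup>* r x" "(restrict_adj (component_of S E r) E)\<^sup>*\<^sup>* r y"
    using rtranclp_within_component_of[OF assms(2)] by (auto simp: component_of_def)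
  then show "(restrict_adj (component_of S E r) E)\<^sup>*\<^sup>* x y"
    using rtranclp_restrict_adj_sym[OF assms(1)] by (meson rtranclp_trans)
qed

lemma rtranclp_distinct_path:
  "R\<^sup>*\<^sup>* a b \<Longrightarrow> \<exists>ps. ps \<noteq> [] \<and> hd ps = a \<and> last ps = b \<and> distinct ps \<and>
     (\<forall>i. Suc i < length ps \<longrightarrow> R (ps ! i) (ps ! Suc i))"
proof (induction rule: rtranclp_induct)
  case base
  show ?case by (intro exI[of _ "[a]"]) auto
next
  case (step b c)
  then obtain ps where ps: "ps \<noteq> []" "hd ps = a" "last ps = b" "distinct ps"
    "\<forall>i. Suc i < length ps \<longrightarrow> R (ps ! i) (ps ! Suc i)" by blast
  show ?case
  proof (cases "c \<in> set ps")
    case False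
    have "\<forall>i. Suc i < length (ps @ [c]) \<longrightarrow> R ((ps @ [c]) ! i) ((ps @ [c]) ! Suc i)"
    proof (intro allI impI)
      fix i assume i: "Suc i < length (ps @ [c])"
      show "R ((ps @ [c]) ! i) ((ps @ [c]) ! Suc i)"
      proof (cases "Suc i < length ps")
        case True
        then show ?thesis using ps(5) by (simp add: nth_append)
      next
        case False
        then have "Suc i = length ps" using i by simp
        then have "i = length ps - 1" by simp
        then have "(ps @ [c]) ! i = last ps" "(ps @ [c]) ! Suc i = c"
          using ps(1) \<open>Suc i = length ps\<close> by (auto simp: nth_append last_conv_nth)
        then show ?thesis using ps(3) step(2) by simp
      qed
    qed
    then show ?thesis using ps False by (intro exI[of _ "ps @ [c]"]) auto
  next
    case True
    then obtain j where j: "j < length ps" "ps ! j = c" by (auto simp: in_set_conv_nth)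
    let ?qs = "take (Suc j) ps"
    have "?qs \<noteq> []" "hd ?qs = a" "distinct ?qs" using ps(1,2,4) by (simp_all add: hd_take)
    moreover have "last ?qs = c" using j by (simp add: take_Suc_conv_app_nth)
    moreover have "\<forall>i. Suc i < length ?qs \<longrightarrow> R (?qs ! i) (?qs ! Suc i)" using ps(5) by auto
    ultimately show ?thesis by blast
  qed
qed

lemma rtranclp_restrict_adj_first_step:
  "(restrict_adj J F)\<^sup>*\<^sup>* u a \<Longrightarrow> a \<noteq> u \<Longrightarrow>
   \<exists>y. F u y \<and> y \<in> J \<and> u \<in> J \<and> (restrict_adj (J - {u}) F)\<^sup>*\<^sup>* y a"
proof (induction rule: rtranclp_induct)
  case (step b c)
  show ?case
  proof (cases "b = u")
    case True
    then show ?thesis using step by (auto simp: restrict_adj_def)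
  next
    case False
    then obtain y where y: "F u y" "y \<in> J" "u \<in> J" "(restrict_adj (J - {u}) F)\<^sup>*\<^sup>* y b"
      using step by blast
    have "restrict_adj (J - {u}) F b c" using step(2) False step(4) by (auto simp: restrict_adj_def)
    then show ?thesis using y by (meson rtranclp.rtrancl_into_rtrancl)
  qed
qed simp

lemma is_cycle_Cons:
  assumes "u \<in> I" "set ps \<subseteq> I - {u}" "distinct ps" "length ps \<ge> 2"
    and path: "\<forall>i. Suc i < length ps \<longrightarrow> F (ps ! i) (ps ! Suc i)"
    and ends: "F u (hd ps)" "F (last ps) u"
  shows "is_cycle I F (u # ps)"
  unfolding is_cycle_def
proof (intro conjI allI impI)
  fix i assume i: "Suc i < length (u # ps)"
  show "F ((u # ps) ! i) ((u # ps) ! Suc i)"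
  proof (cases i)
    case 0
    then show ?thesis using ends(1) assms(4) by (cases ps) auto
  next
    case (Suc i')
    then show ?thesis using path i by simp
  qed
next
  show "F (last (u # ps)) (hd (u # ps))" using ends(2) assms(4) by auto
qed (use assms in auto)

lemma tree_neighbours_disconnected:
  assumes tree: "is_tree I F" and "F u y1" "F u y2" "y1 \<noteq> y2"
  shows "\<not> (restrict_adj (I - {u}) F)\<^sup>*\<^sup>* y1 y2"
proof
  assume path: "(restrict_adj (I - {u}) F)\<^sup>*\<^sup>* y1 y2"
  obtain ps where ps: "ps \<noteq> []" "hd ps = y1" "last ps = y2" "distinct ps"
    and steps: "\<forall>i. Suc i < length ps \<longrightarrow> restrict_adj (I - {u}) F (ps ! i) (ps ! Suc i)"
    using rtranclp_distinct_path[OF path] by blast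
  have sg: "simple_graph I F" using tree by (simp add: is_tree_def)
  then have u: "u \<in> I" and sym: "\<forall>x y. F x y \<longrightarrow> F y x" and irr: "\<forall>x. \<not> F x x"
    using assms(2) by (auto simp: simple_graph_def)
  have y2: "y2 \<in> I - {u}" using assms(3) sg irr by (auto simp: simple_graph_def)
  have "set ps \<subseteq> I - {u}"
  proof
    fix v assume "v \<in> set ps"
    then obtain i where i: "i < length ps" "ps ! i = v" by (auto simp: in_set_conv_nth)
    show "v \<in> I - {u}"
    proof (cases "Suc i < length ps")
      case True
      then show ?thesis using steps i by (auto simp: restrict_adj_def)
    next
      case False
      then have "i = length ps - 1" using i by simp
      then have "v = last ps" using i ps(1) by (simp add: last_conv_nth)
      then show ?thesis using ps(3) y2 by simp
    qed
  qed
  moreover have "length ps \<ge> 2"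
  proof (rule ccontr)
    assume "\<not> length ps \<ge> 2"
    then have "length ps = 1" using ps(1) by (simp add: not_le less_2_cases_iff)
    then have "hd ps = last ps" by (cases ps) auto
    then show False using ps(2,3) assms(4) by simp
  qed
  moreover have "\<forall>i. Suc i < length ps \<longrightarrow> F (ps ! i) (ps ! Suc i)"
    using steps by (simp add: restrict_adj_def)
  ultimately have "is_cycle I F (u # ps)"
    using is_cycle_Cons[OF u _ ps(4)] ps(2,3) assms(2,3) sym by blast
  then show False using tree by (auto simp: is_tree_def)
qed

lemma tree_unique_neighbour_towards:
  assumes tree: "is_tree I F" and "u \<in> I" "a \<in> I" "a \<noteq> u"
  shows "\<exists>y. F u y \<and> y \<in> component_of (I - {u}) F a
    \<and> (\<forall>y'. F u y' \<and> y' \<in> component_of (I - {u}) F a \<longrightarrow> y' = y)"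
proof -
  have sg: "simple_graph I F" and "connected_on I F" using tree by (auto simp: is_tree_def)
  then have sym: "\<forall>x y. F x y \<longrightarrow> F y x" and path: "(restrict_adj I F)\<^sup>*\<^sup>* u a"
    using assms(2,3) by (auto simp: simple_graph_def connected_on_def)
  obtain y where y: "F u y" "y \<in> I" "(restrict_adj (I - {u}) F)\<^sup>*\<^sup>* y a"
    using rtranclp_restrict_adj_first_step[OF path assms(4)] by blast
  have "y \<noteq> u" using y(1) sg by (auto simp: simple_graph_def)
  then have yK: "y \<in> component_of (I - {u}) F a"
    using y rtranclp_restrict_adj_sym[OF sym] by (auto simp: component_of_def)
  have unique: "y' = y" if "F u y'" "y' \<in> component_of (I - {u}) F a" for y'
  proof (rule ccontr)
    assume "y' \<noteq> y"
    have "(restrict_adj (I - {u}) F)\<^sup>*\<^sup>* a y'" using that(2) by (simp add: component_of_def)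
    with y(3) have "(restrict_adj (I - {u}) F)\<^sup>*\<^sup>* y y'" by (rule rtranclp_trans)
    then show False using tree_neighbours_disconnected[OF tree y(1) that(1)] \<open>y' \<noteq> y\<close> by blast
  qed
  with y(1) yK show ?thesis by blast
qed

lemma tree_component_shrinks:
  assumes tree: "is_tree I F" and "a \<in> I" "a \<noteq> u" "a \<noteq> y"
    and y: "F u y" "y \<in> component_of (I - {u}) F a"
    and unique: "\<And>y'. F u y' \<Longrightarrow> y' \<in> component_of (I - {u}) F a \<Longrightarrow> y' = y"
  shows "component_of (I - {y}) F a \<subset> component_of (I - {u}) F a"
proof -
  have sym: "\<forall>x y. F x y \<longrightarrow> F y x" using tree by (simp add: is_tree_def simple_graph_def)
  have u_outside: "u \<notin> component_of (I - {y}) F a"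
  proof
    assume "u \<in> component_of (I - {y}) F a"
    then have path: "(restrict_adj (I - {y}) F)\<^sup>*\<^sup>* u a"
      using rtranclp_restrict_adj_sym[OF sym] by (auto simp: component_of_def)
    obtain y' where y': "F u y'" "y' \<in> I - {y}" "(restrict_adj (I - {y} - {u}) F)\<^sup>*\<^sup>* y' a"
      using rtranclp_restrict_adj_first_step[OF path assms(3)] by blast
    have "(restrict_adj (I - {u}) F)\<^sup>*\<^sup>* y' a"
      using rtranclp_restrict_adj_mono[OF _ y'(3), of "I - {u}"] by blast
    then have "(restrict_adj (I - {u}) F)\<^sup>*\<^sup>* a y'" by (rule rtranclp_restrict_adj_sym[OF sym])
    moreover have "y' \<noteq> u" using y'(1) tree by (auto simp: is_tree_def simple_graph_def)
    ultimately have "y' \<in> component_of (I - {u}) F a" using y'(2) by (simp add: component_of_def)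
    then show False using unique y' by blast
  qed
  have "component_of (I - {y}) F a \<subseteq> component_of (I - {u}) F a - {y}"
  proof
    fix b assume b: "b \<in> component_of (I - {y}) F a"
    have "(restrict_adj (component_of (I - {y}) F a) F)\<^sup>*\<^sup>* a b"
      using rtranclp_within_component_of[of a "I - {y}"] b assms(2,4) by (auto simp: component_of_def)
    moreover have "component_of (I - {y}) F a \<subseteq> I - {u}"
      using u_outside component_of_subset[of "I - {y}" F a] by blast
    ultimately have "(restrict_adj (I - {u}) F)\<^sup>*\<^sup>* a b" by (rule rtranclp_restrict_adj_mono[rotated])
    then show "b \<in> component_of (I - {u}) F a - {y}" using b u_outside by (auto simp: component_of_def)
  qed
  with y(2) show ?thesis by blast
qed

lemma capped_distance:
  fixes R :: "'a \<Rightarrow> 'a \<Rightarrow> bool" and x :: 'a and m :: nat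
  defines "f \<equiv> \<lambda>v. LEAST n. n = m \<or> (R ^^ n) x v"
  shows capped_distance_le: "f v \<le> m"
    and capped_distance_step: "R a b \<Longrightarrow> f b \<le> Suc (f a)"
    and capped_distance_start: "f x = 0"
    and capped_distance_target: "(R ^^ m) x z \<Longrightarrow> (\<And>n. (R ^^ n) x z \<Longrightarrow> m \<le> n) \<Longrightarrow> f z = m"
proof -
  show le: "f v \<le> m" for v unfolding f_def by (rule Least_le) simp
  have reach: "f v = m \<or> (R ^^ f v) x v" for v
    unfolding f_def by (rule LeastI[of _ m]) simp
  show "f b \<le> Suc (f a)" if "R a b"
  proof (cases "f a = m")
    case True
    then show ?thesis using le[of b] by simp
  next
    case False
    then have "(R ^^ f a) x a" using reach[of a] by simp
    then have "(R ^^ Suc (f a)) x b" using that by (rule relpowp_Suc_I)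
    then have "Suc (f a) = m \<or> (R ^^ Suc (f a)) x b" by (rule disjI2)
    then show ?thesis unfolding f_def by (rule Least_le)
  qed
  show "f x = 0" unfolding f_def by (rule Least_eq_0) simp
  show "f z = m" if "(R ^^ m) x z" "\<And>n. (R ^^ n) x z \<Longrightarrow> m \<le> n"
    using reach[of z] le[of z] that(2)[of "f z"] by auto
qed

section \<open>Tree decompositions\<close>

locale tree_decomp =
  fixes V :: "'a set" and E :: "'a \<Rightarrow> 'a \<Rightarrow> bool"
    and I :: "'b set" and F :: "'b \<Rightarrow> 'b \<Rightarrow> bool" and W :: "'b \<Rightarrow> 'a set"
  assumes decomposition: "tree_decomposition V E I F W"
begin

lemma tree: "is_tree I F"
  using decomposition by (simp add: tree_decomposition_def)

lemma bag_subset: "x \<in> I \<Longrightarrow> W x \<subseteq> V"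
  using decomposition by (simp add: tree_decomposition_def)

lemma vertex_in_bag: "v \<in> V \<Longrightarrow> \<exists>x\<in>I. v \<in> W x"
  using decomposition by (auto simp: tree_decomposition_def)

lemma edge_in_bag: "E u v \<Longrightarrow> \<exists>x\<in>I. u \<in> W x \<and> v \<in> W x"
  using decomposition by (simp add: tree_decomposition_def)

lemma bags_of_vertex_path_avoiding:
  assumes "v \<in> V" "v \<notin> W u" "b1 \<in> I" "b2 \<in> I" "v \<in> W b1" "v \<in> W b2"
  shows "(restrict_adj (I - {u}) F)\<^sup>*\<^sup>* b1 b2"
proof -
  have "(restrict_adj {x\<in>I. v \<in> W x} F)\<^sup>*\<^sup>* b1 b2"
    using decomposition assms by (auto simp: tree_decomposition_def connected_on_def)
  then show ?thesis by (rule rtranclp_restrict_adj_mono[rotated]) (use assms(2) in auto)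
qed

definition nbhd :: "'a set \<Rightarrow> 'a set" where
  "nbhd D = {v\<in>V. v \<notin> D \<and> (\<exists>d\<in>D. E d v)}"

lemma bags_of_region_in_component:
  assumes D: "D \<subseteq> V" "connected_on D E" "D \<inter> W u = {}"
    and d0: "d0 \<in> D" "a0 \<in> I" "d0 \<in> W a0"
    and d: "d \<in> D" "b \<in> I" "d \<in> W b"
  shows "b \<in> component_of (I - {u}) F a0"
proof -
  have "(restrict_adj D E)\<^sup>*\<^sup>* d0 d" using D(2) d0(1) d(1) by (auto simp: connected_on_def)
  then show ?thesis
    using d
  proof (induction arbitrary: b rule: rtranclp_induct)
    case base
    then have "(restrict_adj (I - {u}) F)\<^sup>*\<^sup>* a0 b"
      using bags_of_vertex_path_avoiding[of d0 u a0 b] D d0 by blast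
    then show ?case using base D(3) d0 by (auto simp: component_of_def)
  next
    case (step d d')
    then have dd: "E d d'" "d \<in> D" "d' \<in> D" by (auto simp: restrict_adj_def)
    obtain b0 where b0: "b0 \<in> I" "d \<in> W b0" "d' \<in> W b0" using edge_in_bag[OF dd(1)] by blast
    have "(restrict_adj (I - {u}) F)\<^sup>*\<^sup>* a0 b0" using step.IH[OF dd(2) b0(1,2)]
      by (simp add: component_of_def)
    moreover have "(restrict_adj (I - {u}) F)\<^sup>*\<^sup>* b0 b"
      using bags_of_vertex_path_avoiding[of d' u b0 b] dd(3) D step.prems b0 by blast
    ultimately have "(restrict_adj (I - {u}) F)\<^sup>*\<^sup>* a0 b" by (rule rtranclp_trans)
    then show ?case using step.prems dd(3) D(3) by (auto simp: component_of_def)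
  qed
qed

lemma nbhd_in_bag_towards_region:
  assumes D: "D \<subseteq> V" "connected_on D E" "D \<inter> W u = {}" and u: "u \<in> I" "nbhd D \<subseteq> W u"
    and d0: "d0 \<in> D" "a0 \<in> I" "d0 \<in> W a0"
    and unique: "\<And>y'. F u y' \<Longrightarrow> y' \<in> component_of (I - {u}) F a0 \<Longrightarrow> y' = y"
  shows "nbhd D \<subseteq> W y"
proof
  fix v assume v: "v \<in> nbhd D"
  then obtain d where d: "d \<in> D" "E d v" and vV: "v \<in> V" and vu: "v \<in> W u"
    using u(2) by (auto simp: nbhd_def)
  obtain b where b: "b \<in> I" "d \<in> W b" "v \<in> W b" using edge_in_bag[OF d(2)] by blast
  have bK: "b \<in> component_of (I - {u}) F a0"
    using bags_of_region_in_component[OF D d0 d(1) b(1,2)] .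
  let ?T = "{x\<in>I. v \<in> W x}"
  have path: "(restrict_adj ?T F)\<^sup>*\<^sup>* u b"
    using decomposition vV vu b u(1) by (auto simp: tree_decomposition_def connected_on_def)
  have "b \<noteq> u" using bK by (auto simp: component_of_def)
  then obtain y' where y': "F u y'" "y' \<in> ?T" "(restrict_adj (?T - {u}) F)\<^sup>*\<^sup>* y' b"
    using rtranclp_restrict_adj_first_step[OF path] by blast
  have sym: "\<forall>x y. F x y \<longrightarrow> F y x" using tree by (simp add: is_tree_def simple_graph_def)
  have "(restrict_adj (I - {u}) F)\<^sup>*\<^sup>* b y'"
    using rtranclp_restrict_adj_mono[OF _ y'(3), of "I - {u}"] rtranclp_restrict_adj_sym[OF sym] by blast
  moreover have "(restrict_adj (I - {u}) F)\<^sup>*\<^sup>* a0 b" using bK by (simp add: component_of_def)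
  ultimately have "(restrict_adj (I - {u}) F)\<^sup>*\<^sup>* a0 y'" by (rule rtranclp_trans[rotated])
  moreover have "y' \<in> I - {u}" using y'(1,2) tree by (auto simp: is_tree_def simple_graph_def)
  ultimately have "y' = y" using unique y'(1) by (simp add: component_of_def)
  then show "v \<in> W y" using y'(2) by blast
qed

text \<open>Walking from a bag \<open>u\<close> that contains \<open>N(D)\<close> towards the bags meeting \<open>D\<close>, every bag
  passed still contains \<open>N(D)\<close>; the branch of the tree containing those bags shrinks at each step.\<close>

lemma bag_with_nbhd_meeting_region:
  assumes D: "D \<subseteq> V" "D \<noteq> {}" "connected_on D E" and u: "u \<in> I" "nbhd D \<subseteq> W u"
  shows "\<exists>x\<in>D. \<exists>u'\<in>I. nbhd D \<subseteq> W u' \<and> x \<in> W u'"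
proof -
  obtain d0 where d0: "d0 \<in> D" using D(2) by blast
  then obtain a0 where a0: "a0 \<in> I" "d0 \<in> W a0" using vertex_in_bag D(1) by blast
  show ?thesis
    using u
  proof (induction "card (component_of (I - {u}) F a0)" arbitrary: u rule: less_induct)
    case less
    show ?case
    proof (cases "D \<inter> W u = {}")
      case False
      then show ?thesis using less.prems by blast
    next
      case True
      then have "a0 \<noteq> u" using a0 d0 by blast
      obtain y where y: "F u y" "y \<in> component_of (I - {u}) F a0"
        and unique: "\<And>y'. F u y' \<Longrightarrow> y' \<in> component_of (I - {u}) F a0 \<Longrightarrow> y' = y"
        using tree_unique_neighbour_towards[OF tree less.prems(1) a0(1) \<open>a0 \<noteq> u\<close>] by blast
      have yI: "y \<in> I" using y(2) by (auto simp: component_of_def)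
      have N: "nbhd D \<subseteq> W y"
        using nbhd_in_bag_towards_region[OF D(1,3) True less.prems d0 a0 unique] .
      show ?thesis
      proof (cases "D \<inter> W y = {}")
        case False
        then show ?thesis using N yI by blast
      next
        case True
        then have "a0 \<noteq> y" using a0 d0 by blast
        then have "component_of (I - {y}) F a0 \<subset> component_of (I - {u}) F a0"
          using tree_component_shrinks[OF tree a0(1) \<open>a0 \<noteq> u\<close> _ y unique] by blast
        moreover have "finite I" using tree by (simp add: is_tree_def simple_graph_def)
        then have "finite (component_of (I - {u}) F a0)"
          by (rule finite_subset[rotated]) (auto simp: component_of_def)
        ultimately have "card (component_of (I - {y}) F a0) < card (component_of (I - {u}) F a0)"
          by (rule psubset_card_mono[rotated])
        then show ?thesis by (rule less.hyps[OF _ yI N])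
      qed
    qed
  qed
qed

end

section \<open>The guarding strategy\<close>

locale cops_on_decomposition = tree_decomp V E I F W
  for V :: "'a set" and E and I :: "'b set" and F and W +
  fixes k :: nat
  assumes simple: "simple_graph V E"
    and connected: "connected_on V E"
    and small_bags: "\<forall>x\<in>I. card (W x) \<le> 2 * k"
begin

lemma edge_in_vertices: "E x y \<Longrightarrow> x \<in> V \<and> y \<in> V"
  using simple by (simp add: simple_graph_def)

lemma sym_edges: "\<forall>x y. E x y \<longrightarrow> E y x"
  using simple by (simp add: simple_graph_def)

sublocale cops_robber_game V E k
  using simple by unfold_locales (simp add: simple_graph_def)

lemma moves_iff: "moves a b \<longleftrightarrow> a = b \<or> E a b"
  using edge_in_vertices by (auto simp: step_ok_def restrict_adj_def)

definition closed_nbhd :: "'a set \<Rightarrow> 'a set" where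
  "closed_nbhd D = D \<union> nbhd D"

lemma nbhd_subset: "nbhd D \<subseteq> V"
  by (auto simp: nbhd_def)

lemma closed_nbhd_mono: "D' \<subseteq> D \<Longrightarrow> closed_nbhd D' \<subseteq> closed_nbhd D"
  by (auto simp: closed_nbhd_def nbhd_def)

lemma move_into_closed_nbhd: "r \<in> D \<Longrightarrow> moves r r' \<Longrightarrow> r' \<in> closed_nbhd D"
  using edge_in_vertices by (auto simp: moves_iff closed_nbhd_def nbhd_def)

text \<open>A cop guards a set \<open>Z\<close> of vertices by shadowing the robber along a walk \<open>q 0, \<dots>, q m\<close>:
  \<open>f\<close> projects the robber's possible positions onto the walk, changing by at most one along each
  edge he can use, and every guarded \<open>z\<close> is its own projection \<open>q (f z)\<close>. A cop standing at
  \<open>q (f r)\<close> therefore stands on \<open>z\<close> whenever the robber does, and one cop step restores this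
  after each robber step.\<close>

definition guarding_walk :: "'a set \<Rightarrow> (nat \<Rightarrow> 'a) \<Rightarrow> nat \<Rightarrow> ('a \<Rightarrow> nat) \<Rightarrow> bool" where
  "guarding_walk D q m f \<longleftrightarrow> (\<forall>j\<le>m. q j \<in> V) \<and> (\<forall>j<m. q j = q (Suc j) \<or> E (q j) (q (Suc j)))
     \<and> (\<forall>a\<in>D. \<forall>b\<in>closed_nbhd D. E a b \<longrightarrow> f b \<le> Suc (f a) \<and> f a \<le> Suc (f b))
     \<and> (\<forall>v\<in>closed_nbhd D. f v \<le> m)"

definition guard_ready ::
  "'a set \<Rightarrow> 'a set \<Rightarrow> (nat \<Rightarrow> 'a) \<Rightarrow> nat \<Rightarrow> ('a \<Rightarrow> nat) \<Rightarrow> nat \<Rightarrow> 'a \<Rightarrow> 'a \<Rightarrow> bool" where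
  "guard_ready D Z q m f j c r \<longleftrightarrow> guarding_walk D q m f \<and> j \<le> m \<and> c = q j
     \<and> f r \<le> Suc j \<and> j \<le> Suc (f r) \<and> (\<forall>z\<in>Z. z = q (f z))"

definition guard_in_place ::
  "'a set \<Rightarrow> 'a set \<Rightarrow> (nat \<Rightarrow> 'a) \<Rightarrow> nat \<Rightarrow> ('a \<Rightarrow> nat) \<Rightarrow> 'a \<Rightarrow> 'a \<Rightarrow> bool" where
  "guard_in_place D Z q m f c r \<longleftrightarrow> guarding_walk D q m f \<and> (\<forall>z\<in>Z. z = q (f z))
     \<and> c = q (f r) \<and> f r \<le> m"

text \<open>A cop walking up towards \<open>z = q m\<close> keeps \<open>f r \<le> j + 1\<close>, so he reaches \<open>z\<close> in time if the
  robber heads there.\<close>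

definition guard_approach ::
  "'a set \<Rightarrow> 'a \<Rightarrow> (nat \<Rightarrow> 'a) \<Rightarrow> nat \<Rightarrow> ('a \<Rightarrow> nat) \<Rightarrow> nat \<Rightarrow> 'a \<Rightarrow> 'a \<Rightarrow> bool" where
  "guard_approach D z q m f j c r \<longleftrightarrow> guarding_walk D q m f \<and> j \<le> m \<and> c = q j
     \<and> f r \<le> Suc j \<and> z = q m \<and> f z = m"

text \<open>\<open>Z i\<close> is the share of the boundary \<open>N(D)\<close> guarded by cop \<open>i\<close>.\<close>

definition confined :: "'a set \<Rightarrow> (nat \<Rightarrow> 'a set) \<Rightarrow> (nat \<Rightarrow> 'a) \<Rightarrow> 'a \<Rightarrow> bool" where
  "confined D Z c r \<longleftrightarrow> D \<subseteq> V \<and> connected_on D E \<and> r \<in> closed_nbhd D \<and> (\<forall>i<k. c i \<in> V)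
     \<and> (\<forall>i<k. Z i \<subseteq> nbhd D) \<and> (\<forall>i<k. \<forall>i'<k. i \<noteq> i' \<longrightarrow> Z i \<inter> Z i' = {})
     \<and> nbhd D \<subseteq> (\<Union>i<k. Z i)"

definition guards_ready :: "'a set \<Rightarrow> (nat \<Rightarrow> 'a set) \<Rightarrow> (nat \<Rightarrow> 'a) \<Rightarrow> 'a \<Rightarrow> nat set \<Rightarrow> bool" where
  "guards_ready D Z c r A \<longleftrightarrow>
     (\<forall>i<k. i \<notin> A \<longrightarrow> Z i \<noteq> {} \<longrightarrow> (\<exists>q m f j. guard_ready D (Z i) q m f j (c i) r))"

definition guards_in_place :: "'a set \<Rightarrow> (nat \<Rightarrow> 'a set) \<Rightarrow> (nat \<Rightarrow> 'a) \<Rightarrow> 'a \<Rightarrow> nat set \<Rightarrow> bool" where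
  "guards_in_place D Z c r A \<longleftrightarrow>
     (\<forall>i<k. i \<notin> A \<longrightarrow> Z i \<noteq> {} \<longrightarrow> (\<exists>q m f. guard_in_place D (Z i) q m f (c i) r))"

definition settled :: "'a set \<Rightarrow> (nat \<Rightarrow> 'a set) \<Rightarrow> (nat \<Rightarrow> 'a) \<Rightarrow> 'a \<Rightarrow> bool" where
  "settled D Z c r \<longleftrightarrow> confined D Z c r \<and> (\<exists>u\<in>I. nbhd D \<subseteq> W u) \<and> guards_ready D Z c r {}"

definition on_walk_to :: "'a \<Rightarrow> (nat \<Rightarrow> 'a) \<Rightarrow> nat \<Rightarrow> nat \<Rightarrow> 'a \<Rightarrow> bool" where
  "on_walk_to x p L j c \<longleftrightarrow> j \<le> L \<and> c = p j \<and> p L = x \<and> (\<forall>i\<le>L. p i \<in> V)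
     \<and> (\<forall>i<L. p i = p (Suc i) \<or> E (p i) (p (Suc i)))"

text \<open>Cop \<open>i\<close> has been released to go and guard a vertex \<open>x \<in> D\<close> lying in one bag with \<open>N(D)\<close>.\<close>

definition chasing :: "'a set \<Rightarrow> (nat \<Rightarrow> 'a set) \<Rightarrow> 'a \<Rightarrow> nat \<Rightarrow> (nat \<Rightarrow> 'a) \<Rightarrow> 'a \<Rightarrow> bool" where
  "chasing D Z x i c r \<longleftrightarrow> confined D Z c r \<and> x \<in> D \<and> (\<exists>u\<in>I. nbhd D \<union> {x} \<subseteq> W u) \<and> i < k
     \<and> guards_ready D Z c r {i}"

text \<open>In the sweep the cop steps down the walk every round while \<open>j - f r\<close> never grows.\<close>

definition sweep_rank :: "nat \<Rightarrow> nat \<Rightarrow> nat \<Rightarrow> nat" where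
  "sweep_rank m j fr = (if fr < j then (j - fr) * (m + 2) + j else 0)"

text \<open>The three phases of the released cop: travelling to \<open>x\<close> (no duty), walking to his single
  duty \<open>z\<close>, and sweeping back from \<open>z\<close> to \<open>x\<close> along a shortest path.\<close>

definition ranked :: "nat \<times> nat \<times> nat \<Rightarrow> (nat \<Rightarrow> 'a) \<Rightarrow> 'a \<Rightarrow> bool" where
  "ranked w c r \<longleftrightarrow> (\<exists>D Z x i. chasing D Z x i c r \<and>
     ((Z i = {} \<and> (\<exists>p L j. on_walk_to x p L j (c i) \<and> w = (card D, 1, L - j)))
    \<or> (\<exists>z q m f j. Z i = {z} \<and> guard_approach D z q m f j (c i) r \<and> w = (card D, 1, m - j))
    \<or> (\<exists>z q m f j. Z i = {z} \<and> guard_approach D z q m f j (c i) r \<and> q 0 = x \<and> f x = 0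
        \<and> w = (card D, 0, sweep_rank m j (f r)))))"

lemma guarding_walk_step:
  assumes "guarding_walk D q m f" "j \<le> m" "j' \<le> m" "j' \<le> Suc j" "j \<le> Suc j'"
  shows "q j' \<in> V \<and> moves (q j) (q j')"
proof -
  have qV: "q j' \<in> V" using assms(1,3) by (simp add: guarding_walk_def)
  consider "j' = j" | "j' = Suc j" | "j = Suc j'" using assms(4,5) by linarith
  then show ?thesis
  proof cases
    case 1
    then show ?thesis using qV by (simp add: moves_iff)
  next
    case 2
    then have "q j = q j' \<or> E (q j) (q j')" using assms(1,3) by (simp add: guarding_walk_def)
    then show ?thesis using qV by (simp add: moves_iff)
  next
    case 3
    then have "q j' = q j \<or> E (q j') (q j)" using assms(1,2) by (simp add: guarding_walk_def)
    then show ?thesis using qV sym_edges by (auto simp: moves_iff)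
  qed
qed

lemma guarding_walk_mono: "guarding_walk D q m f \<Longrightarrow> D' \<subseteq> D \<Longrightarrow> guarding_walk D' q m f"
  using closed_nbhd_mono unfolding guarding_walk_def by blast

lemma guarding_walk_lipschitz:
  assumes "guarding_walk D q m f" "r \<in> D" "moves r r'"
  shows "f r' \<le> Suc (f r) \<and> f r \<le> Suc (f r')"
proof (cases "r' = r")
  case False
  then have "E r r'" using assms(3) by (simp add: moves_iff)
  then show ?thesis using assms move_into_closed_nbhd unfolding guarding_walk_def by blast
qed simp

lemma guard_in_place_ready:
  "guard_in_place D Z q m f c r \<Longrightarrow> r \<in> D \<Longrightarrow> moves r r' \<Longrightarrow> guard_ready D Z q m f (f r) c r'"
  using guarding_walk_lipschitz[of D q m f r r'] by (simp add: guard_in_place_def guard_ready_def)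

lemma guards_in_place_ready:
  "guards_in_place D Z c r A \<Longrightarrow> r \<in> D \<Longrightarrow> moves r r' \<Longrightarrow> guards_ready D Z c r' A"
  unfolding guards_in_place_def guards_ready_def using guard_in_place_ready by blast

lemma guards_ready_restrict:
  assumes "guards_ready D Z c r A" "D' \<subseteq> D"
  shows "guards_ready D' (\<lambda>j. Z j \<inter> S) c r A"
  unfolding guards_ready_def
proof (intro allI impI)
  fix j assume j: "j < k" "j \<notin> A" "Z j \<inter> S \<noteq> {}"
  then obtain q m f l where "guard_ready D (Z j) q m f l (c j) r"
    using assms(1) unfolding guards_ready_def by blast
  then have "guard_ready D' (Z j \<inter> S) q m f l (c j) r"
    using guarding_walk_mono[OF _ assms(2)] by (auto simp: guard_ready_def)
  then show "\<exists>q m f l. guard_ready D' (Z j \<inter> S) q m f l (c j) r" by blast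
qed

lemma guards_in_place_catch:
  assumes "guards_in_place D Z c r A" "i < k" "i \<notin> A" "r \<in> Z i"
  shows "catches c r"
proof -
  obtain q m f where "guard_in_place D (Z i) q m f (c i) r"
    using assms unfolding guards_in_place_def by blast
  then have "c i = r" using assms(4) unfolding guard_in_place_def by metis
  then show ?thesis using assms(2) unfolding catches_def by blast
qed

lemma guards_take_place:
  assumes "confined D Z c r" and "guards_ready D Z c r A"
  shows "\<exists>c'. (\<forall>i<k. i \<notin> A \<longrightarrow> c' i \<in> V \<and> moves (c i) (c' i)) \<and> guards_in_place D Z c' r A"
proof -
  define c' where "c' i = (if i \<notin> A \<and> Z i \<noteq> {} then
     (SOME v. \<exists>q m f j. guard_ready D (Z i) q m f j (c i) r \<and> v = q (f r)) else c i)" for i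
  have r: "r \<in> closed_nbhd D" using assms(1) by (simp add: confined_def)
  have busy: "\<exists>q m f j. guard_ready D (Z i) q m f j (c i) r \<and> c' i = q (f r) \<and> f r \<le> m"
    if i: "i < k" "i \<notin> A" "Z i \<noteq> {}" for i
  proof -
    have "\<exists>v. \<exists>q m f j. guard_ready D (Z i) q m f j (c i) r \<and> v = q (f r)"
      using assms(2) i unfolding guards_ready_def by blast
    from someI_ex[OF this] obtain q m f j where "guard_ready D (Z i) q m f j (c i) r" "c' i = q (f r)"
      using i by (auto simp: c'_def)
    moreover have "f r \<le> m" using calculation(1) r by (simp add: guard_ready_def guarding_walk_def)
    ultimately show ?thesis by blast
  qed
  have "c' i \<in> V \<and> moves (c i) (c' i)" if i: "i < k" "i \<notin> A" for i
  proof (cases "Z i = {}")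
    case True
    then show ?thesis using assms(1) i by (simp add: c'_def confined_def moves_iff)
  next
    case False
    then obtain q m f j where "guard_ready D (Z i) q m f j (c i) r" "c' i = q (f r)" "f r \<le> m"
      using busy i by blast
    then show ?thesis using guarding_walk_step[of D q m f j "f r"] by (simp add: guard_ready_def)
  qed
  moreover have "guards_in_place D Z c' r A"
    unfolding guards_in_place_def
  proof (intro allI impI)
    fix i assume "i < k" "i \<notin> A" "Z i \<noteq> {}"
    then obtain q m f j where "guard_ready D (Z i) q m f j (c i) r" "c' i = q (f r)" "f r \<le> m"
      using busy by blast
    then show "\<exists>q m f. guard_in_place D (Z i) q m f (c' i) r"
      by (auto simp: guard_ready_def guard_in_place_def)
  qed
  ultimately show ?thesis by blast
qed

text \<open>Otherwise the pairwise disjoint duties inside \<open>N(D)\<close> cover at least \<open>2k\<close> vertices, and a bag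
  containing them and also \<open>x \<notin> N(D)\<close> would be too large.\<close>

lemma cop_with_small_duty:
  assumes conf: "confined D Z c r" and u: "u \<in> I" "nbhd D \<union> {x} \<subseteq> W u" and x: "x \<in> D"
  shows "\<exists>i<k. Z i = {} \<or> card (Z i) = 1"
proof (rule ccontr)
  assume "\<not> ?thesis"
  then have large: "\<forall>i<k. Z i \<noteq> {} \<and> card (Z i) \<noteq> 1" by blast
  have fin_nbhd: "finite (nbhd D)" using finite_vertices nbhd_subset finite_subset by blast
  have sub: "\<forall>i<k. Z i \<subseteq> nbhd D" and disj: "\<forall>i<k. \<forall>i'<k. i \<noteq> i' \<longrightarrow> Z i \<inter> Z i' = {}"
    using conf by (auto simp: confined_def)
  have fin: "\<forall>i\<in>{..<k}. finite (Z i)" using sub fin_nbhd finite_subset by blast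
  have two: "\<forall>i\<in>{..<k}. 2 \<le> card (Z i)"
  proof
    fix i assume "i \<in> {..<k}"
    then have "Z i \<noteq> {}" "card (Z i) \<noteq> 1" "finite (Z i)" using large fin by auto
    then show "2 \<le> card (Z i)" by (metis One_nat_def card_0_eq less_2_cases not_le)
  qed
  have "2 * k = (\<Sum>i\<in>{..<k}. 2)" by simp
  also have "\<dots> \<le> (\<Sum>i\<in>{..<k}. card (Z i))" using two by (intro sum_mono) auto
  also have "\<dots> = card (\<Union>i\<in>{..<k}. Z i)"
    by (rule card_UN_disjoint[symmetric]) (use fin disj in auto)
  also have "\<dots> \<le> card (nbhd D)" using sub fin_nbhd by (intro card_mono) auto
  finally have "2 * k \<le> card (nbhd D)" .
  moreover have "x \<notin> nbhd D" using x by (simp add: nbhd_def)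
  then have "card (nbhd D \<union> {x}) = Suc (card (nbhd D))" using fin_nbhd by simp
  moreover have "card (nbhd D \<union> {x}) \<le> card (W u)"
    using u finite_subset[OF bag_subset[OF u(1)] finite_vertices] by (intro card_mono) auto
  ultimately show False using small_bags u(1) by fastforce
qed

lemma walk_between:
  assumes "a \<in> V" "b \<in> V"
  shows "\<exists>p L. on_walk_to b p L 0 a"
proof -
  have "(restrict_adj V E)\<^sup>*\<^sup>* a b" using connected assms by (simp add: connected_on_def)
  then obtain n where "((restrict_adj V E) ^^ n) a b" using rtranclp_imp_relpowp by metis
  then obtain p where p: "p 0 = a" "p n = b" "\<forall>i<n. restrict_adj V E (p i) (p (Suc i))"
    unfolding relpowp_fun_conv by blast
  have "p i \<in> V" if "i \<le> n" for i
  proof (cases "i = n")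
    case False
    then show ?thesis using p(3) that by (auto simp: restrict_adj_def)
  qed (use p(2) assms(2) in simp)
  then have "on_walk_to b p n 0 a" using p by (auto simp: on_walk_to_def restrict_adj_def)
  then show ?thesis by blast
qed

lemma guarding_walk_truncate:
  assumes walk: "guarding_walk D q m f" and "h \<le> m"
  shows "guarding_walk D q h (\<lambda>v. min (f v) h)"
proof -
  have "min (f b) h \<le> Suc (min (f a) h) \<and> min (f a) h \<le> Suc (min (f b) h)"
    if "a \<in> D" "b \<in> closed_nbhd D" "E a b" for a b
    using walk that unfolding guarding_walk_def by fastforce
  then show ?thesis using walk \<open>h \<le> m\<close> unfolding guarding_walk_def by auto
qed

lemma guarding_walk_reverse:
  assumes walk: "guarding_walk D q m f" and "h \<le> m"
  shows "guarding_walk D (\<lambda>j. q (m - j)) (m - h) (\<lambda>v. m - max (f v) h)"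
proof -
  have range: "\<forall>v\<in>closed_nbhd D. f v \<le> m" using walk by (simp add: guarding_walk_def)
  have "q (m - j) = q (m - Suc j) \<or> E (q (m - j)) (q (m - Suc j))" if "j < m - h" for j
  proof -
    have "q (m - Suc j) = q (Suc (m - Suc j)) \<or> E (q (m - Suc j)) (q (Suc (m - Suc j)))"
      using walk that by (simp add: guarding_walk_def)
    moreover have "Suc (m - Suc j) = m - j" using that by simp
    ultimately show ?thesis using sym_edges by auto
  qed
  moreover have "m - max (f b) h \<le> Suc (m - max (f a) h) \<and> m - max (f a) h \<le> Suc (m - max (f b) h)"
    if "a \<in> D" "b \<in> closed_nbhd D" "E a b" for a b
  proof -
    have "f a \<le> m" "f b \<le> m" using range that by (auto simp: closed_nbhd_def)
    moreover have "f b \<le> Suc (f a) \<and> f a \<le> Suc (f b)"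
      using walk that unfolding guarding_walk_def by blast
    ultimately show ?thesis by (auto simp: max_def)
  qed
  ultimately show ?thesis using walk by (auto simp: guarding_walk_def)
qed

text \<open>A cop guarding \<open>z\<close> can start walking towards it: if he stands below \<open>f z\<close> on the walk,
  cap \<open>f\<close> at \<open>f z\<close>; otherwise turn the walk around.\<close>

lemma guard_ready_approach:
  assumes ready: "guard_ready D Z Q M g J c r" and z: "z \<in> Z" "z \<in> closed_nbhd D"
  shows "\<exists>q m f j. guard_approach D z q m f j c r"
proof -
  have walk: "guarding_walk D Q M g" and J: "J \<le> M" "c = Q J" "g r \<le> Suc J" "J \<le> Suc (g r)"
    and zQ: "z = Q (g z)" using ready z by (auto simp: guard_ready_def)
  have h: "g z \<le> M" using walk z by (simp add: guarding_walk_def)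
  show ?thesis
  proof (cases "J \<le> g z")
    case True
    have "guard_approach D z Q (g z) (\<lambda>v. min (g v) (g z)) J c r"
      using guarding_walk_truncate[OF walk h] True J zQ by (simp add: guard_approach_def)
    then show ?thesis by blast
  next
    case False
    have "guard_approach D z (\<lambda>j. Q (M - j)) (M - g z) (\<lambda>v. M - max (g v) (g z)) (M - J) c r"
      using guarding_walk_reverse[OF walk h] False J zQ h by (auto simp: guard_approach_def max_def)
    then show ?thesis by blast
  qed
qed

text \<open>The sweep uses a shortest path \<open>q\<close> from \<open>x\<close> to \<open>z\<close> in the graph induced by \<open>D \<union> N(D)\<close>,
  projecting by the distance from \<open>x\<close>.\<close>

lemma sweeping_walk:
  assumes D: "D \<subseteq> V" "connected_on D E" and x: "x \<in> D" and z: "z \<in> nbhd D"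
  shows "\<exists>q m f. guarding_walk D q m f \<and> q 0 = x \<and> q m = z \<and> f x = 0 \<and> f z = m"
proof -
  let ?R = "restrict_adj (closed_nbhd D) E"
  obtain d where d: "d \<in> D" "E d z" using z by (auto simp: nbhd_def)
  have "(restrict_adj D E)\<^sup>*\<^sup>* x d" using D(2) x d(1) by (simp add: connected_on_def)
  then have "?R\<^sup>*\<^sup>* x d" by (rule rtranclp_restrict_adj_mono[rotated]) (auto simp: closed_nbhd_def)
  moreover have "?R d z" using d z by (auto simp: restrict_adj_def closed_nbhd_def)
  ultimately have "?R\<^sup>*\<^sup>* x z" by (rule rtranclp.rtrancl_into_rtrancl)
  then have ex: "\<exists>n. (?R ^^ n) x z" using rtranclp_imp_relpowp by metis
  define m where "m = (LEAST n. (?R ^^ n) x z)"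
  have "(?R ^^ m) x z" unfolding m_def using LeastI_ex[OF ex] .
  then obtain q where q: "q 0 = x" "q m = z" "\<forall>i<m. ?R (q i) (q (Suc i))"
    unfolding relpowp_fun_conv by blast
  have shortest: "m \<le> n" if "(?R ^^ n) x z" for n unfolding m_def using that by (rule Least_le)
  define f where "f = (\<lambda>v. LEAST n. n = m \<or> (?R ^^ n) x v)"
  have "closed_nbhd D \<subseteq> V" using D(1) nbhd_subset[of D] by (auto simp: closed_nbhd_def)
  moreover have "q j \<in> closed_nbhd D" if "j \<le> m" for j
  proof (cases "j = m")
    case False
    then show ?thesis using q(3) that by (auto simp: restrict_adj_def)
  qed (use q(2) z in \<open>auto simp: closed_nbhd_def\<close>)
  ultimately have "q j \<in> V" if "j \<le> m" for j using that by blast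
  moreover have "f b \<le> Suc (f a) \<and> f a \<le> Suc (f b)" if "a \<in> D" "b \<in> closed_nbhd D" "E a b" for a b
    using that sym_edges capped_distance_step[of ?R] unfolding f_def
    by (auto simp: restrict_adj_def closed_nbhd_def)
  ultimately have "guarding_walk D q m f"
    using q(3) capped_distance_le[of m ?R] unfolding guarding_walk_def f_def
    by (auto simp: restrict_adj_def)
  moreover have "f x = 0" "f z = m"
    using capped_distance_start capped_distance_target[OF \<open>(?R ^^ m) x z\<close> shortest] by (simp_all add: f_def)
  ultimately show ?thesis using q(1,2) by blast
qed

lemma ranked_travelling:
  assumes "chasing D Z x i c r" "Z i = {}" "on_walk_to x p L j (c i)"
  shows "ranked (card D, 1, L - j) c r"
  unfolding ranked_def by (rule exI[of _ D], rule exI[of _ Z], rule exI[of _ x], rule exI[of _ i])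
    (use assms in blast)

lemma ranked_approaching:
  assumes "chasing D Z x i c r" "Z i = {z}" "guard_approach D z q m f j (c i) r"
  shows "ranked (card D, 1, m - j) c r"
  unfolding ranked_def by (rule exI[of _ D], rule exI[of _ Z], rule exI[of _ x], rule exI[of _ i])
    (use assms in blast)

lemma ranked_sweeping:
  assumes "chasing D Z x i c r" "Z i = {z}" "guard_approach D z q m f j (c i) r" "q 0 = x" "f x = 0"
  shows "ranked (card D, 0, sweep_rank m j (f r)) c r"
  unfolding ranked_def by (rule exI[of _ D], rule exI[of _ Z], rule exI[of _ x], rule exI[of _ i])
    (use assms in blast)

lemma ranked_of_settled:
  assumes "settled D Z c r"
  shows "\<exists>b1 b2. ranked (card D, b1, b2) c r"
proof -
  have conf: "confined D Z c r" and "\<exists>u\<in>I. nbhd D \<subseteq> W u" and ready: "guards_ready D Z c r {}"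
    using assms by (auto simp: settled_def)
  have D: "D \<subseteq> V" "connected_on D E" and r: "r \<in> closed_nbhd D" and cV: "\<forall>i<k. c i \<in> V"
    and sub: "\<forall>i<k. Z i \<subseteq> nbhd D"
    using conf by (auto simp: confined_def)
  have "D \<noteq> {}" using r by (auto simp: closed_nbhd_def nbhd_def)
  then obtain x u where x: "x \<in> D" "u \<in> I" "nbhd D \<union> {x} \<subseteq> W u"
    using bag_with_nbhd_meeting_region[OF D(1) _ D(2)] \<open>\<exists>u\<in>I. nbhd D \<subseteq> W u\<close> by blast
  obtain i where i: "i < k" "Z i = {} \<or> card (Z i) = 1" using cop_with_small_duty[OF conf x(2,3,1)] by blast
  have chasing: "chasing D Z x i c r"
    using conf x i(1) ready by (auto simp: chasing_def guards_ready_def)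
  show ?thesis
  proof (cases "Z i = {}")
    case True
    obtain p L where "on_walk_to x p L 0 (c i)" using walk_between cV i(1) x(1) D(1) by blast
    then have "ranked (card D, 1, L - 0) c r" by (rule ranked_travelling[OF chasing True])
    then show ?thesis by blast
  next
    case False
    then obtain z where z: "Z i = {z}" using i(2) by (metis card_1_singletonE)
    then obtain Q M g J where "guard_ready D (Z i) Q M g J (c i) r"
      using ready i(1) by (auto simp: guards_ready_def)
    moreover have "z \<in> closed_nbhd D" using sub i(1) z by (auto simp: closed_nbhd_def)
    ultimately obtain q m f j where "guard_approach D z q m f j (c i) r"
      using guard_ready_approach z by blast
    then have "ranked (card D, 1, m - j) c r" by (rule ranked_approaching[OF chasing z])
    then show ?thesis by blast
  qed
qed

lemma chasing_round:
  assumes "chasing D Z x i c r" "v \<in> V" "moves (c i) v"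
  obtains c' where "cops_move c c'" "c' i = v" "guards_in_place D Z c' r {i}"
proof -
  obtain c1 where c1: "\<forall>j<k. j \<notin> {i} \<longrightarrow> c1 j \<in> V \<and> moves (c j) (c1 j)"
    and in_place: "guards_in_place D Z c1 r {i}"
    using guards_take_place[of D Z c r "{i}"] assms(1) unfolding chasing_def by blast
  have "cops_move c (c1(i := v))" using c1 assms(2,3) by (simp add: cops_move_def)
  moreover have "guards_in_place D Z (c1(i := v)) r {i}" using in_place by (simp add: guards_in_place_def)
  ultimately show ?thesis using that by simp
qed

lemma boundary_robber_caught:
  assumes chasing: "chasing D Z x i c r" and "guards_in_place D Z c' r {i}" "r \<notin> D"
    and own_duty: "r \<in> Z i \<Longrightarrow> c' i = r"
  shows "catches c' r"
proof -
  have "r \<in> nbhd D" using chasing \<open>r \<notin> D\<close> by (auto simp: chasing_def confined_def closed_nbhd_def)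
  then obtain j where "j < k" "r \<in> Z j" using chasing by (auto simp: chasing_def confined_def)
  then show ?thesis
    using guards_in_place_catch[OF assms(2)] own_duty chasing unfolding chasing_def catches_def
    by (cases "j = i") blast+
qed

lemma chasing_after_round:
  assumes "chasing D Z x i c r" "cops_move c c'" "guards_in_place D Z c' r {i}" "r \<in> D" "moves r r'"
  shows "chasing D Z x i c' r'"
proof -
  have "confined D Z c r" using assms(1) by (simp add: chasing_def)
  moreover have "\<forall>j<k. c' j \<in> V" using assms(2) by (simp add: cops_move_def)
  ultimately have "confined D Z c' r'"
    using move_into_closed_nbhd[OF assms(4,5)] by (simp add: confined_def)
  then show ?thesis using assms(1) guards_in_place_ready[OF assms(3-5)] by (simp add: chasing_def)
qed

lemma robber_region_nbhd:
  assumes "x \<in> D" "r \<in> D - {x}"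
  shows "nbhd (component_of (D - {x}) E r) \<subseteq> nbhd D \<union> {x}"
proof
  fix v assume v: "v \<in> nbhd (component_of (D - {x}) E r)"
  then obtain d where d: "d \<in> component_of (D - {x}) E r" "E d v" and "v \<in> V"
    and v_out: "v \<notin> component_of (D - {x}) E r" by (auto simp: nbhd_def)
  show "v \<in> nbhd D \<union> {x}"
  proof (rule ccontr)
    assume "v \<notin> nbhd D \<union> {x}"
    then have vD: "v \<in> D - {x}" using d component_of_subset \<open>v \<in> V\<close> by (fastforce simp: nbhd_def)
    have "(restrict_adj (D - {x}) E)\<^sup>*\<^sup>* r d" using d(1) by (simp add: component_of_def)
    moreover have "restrict_adj (D - {x}) E d v"
      using d vD component_of_subset by (fastforce simp: restrict_adj_def)
    ultimately have "(restrict_adj (D - {x}) E)\<^sup>*\<^sup>* r v" by (rule rtranclp.rtrancl_into_rtrancl)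
    then show False using vD v_out by (simp add: component_of_def)
  qed
qed

text \<open>Once \<open>x\<close> is guarded as well, the robber is confined to his component \<open>D'\<close> of \<open>D - x\<close>,
  whose boundary lies in \<open>N(D) \<union> {x}\<close>; the duties are cut down to \<open>N(D')\<close>.\<close>

lemma settled_in_robber_region:
  assumes chasing: "chasing D Z x i c r" and r: "r \<in> D" "r \<noteq> x" and c': "\<forall>j<k. c' j \<in> V"
    and in_place: "guards_in_place D (Z(i := Z i \<union> {x})) c' r {}" and move: "moves r r'"
  defines "D' \<equiv> component_of (D - {x}) E r"
  shows "settled D' (\<lambda>j. (Z(i := Z i \<union> {x})) j \<inter> nbhd D') c' r'"
proof -
  have conf: "confined D Z c r" and x: "x \<in> D" and i: "i < k"
    and bag: "\<exists>u\<in>I. nbhd D \<union> {x} \<subseteq> W u"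
    using chasing by (auto simp: chasing_def)
  have rD': "r \<in> D'" using r by (simp add: D'_def in_component_of_self)
  have D'D: "D' \<subseteq> D - {x}" unfolding D'_def by (rule component_of_subset)
  have nbhd: "nbhd D' \<subseteq> nbhd D \<union> {x}" unfolding D'_def using robber_region_nbhd x r by blast
  have x_free: "\<forall>j<k. x \<notin> Z j" using conf x by (auto simp: confined_def nbhd_def)
  have "confined D' (\<lambda>j. (Z(i := Z i \<union> {x})) j \<inter> nbhd D') c' r'"
    unfolding confined_def
  proof (intro conjI allI impI)
    show "D' \<subseteq> V" using D'D conf by (auto simp: confined_def)
    show "connected_on D' E" unfolding D'_def using connected_on_component_of[OF sym_edges] r by simp
    show "r' \<in> closed_nbhd D'" using move_into_closed_nbhd[OF rD' move] .
    show "nbhd D' \<subseteq> (\<Union>j<k. (Z(i := Z i \<union> {x})) j \<inter> nbhd D')"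
    proof
      fix v assume v: "v \<in> nbhd D'"
      show "v \<in> (\<Union>j<k. (Z(i := Z i \<union> {x})) j \<inter> nbhd D')"
      proof (cases "v = x")
        case False
        then obtain j where "j < k" "v \<in> Z j" using v nbhd conf by (auto simp: confined_def)
        then show ?thesis using v by (cases "j = i") auto
      qed (use v i in auto)
    qed
  next
    fix j j' assume j: "j < k" "j' < k" "j \<noteq> j'"
    then have "Z j \<inter> Z j' = {}" "x \<notin> Z j" "x \<notin> Z j'" using conf x_free by (auto simp: confined_def)
    then show "(Z(i := Z i \<union> {x})) j \<inter> nbhd D' \<inter> ((Z(i := Z i \<union> {x})) j' \<inter> nbhd D') = {}"
      using j(3) by auto
  qed (use c' in auto)
  moreover have "guards_ready D' (\<lambda>j. (Z(i := Z i \<union> {x})) j \<inter> nbhd D') c' r' {}"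
    using guards_ready_restrict[OF guards_in_place_ready[OF in_place r(1) move]] D'D by blast
  ultimately show ?thesis using nbhd bag by (auto simp: settled_def)
qed

lemma guards_in_place_extend:
  assumes "guards_in_place D Z c r {i}" "guard_in_place D Y q m f (c i) r"
  shows "guards_in_place D (Z(i := Y)) c r {}"
  unfolding guards_in_place_def
proof (intro allI impI)
  fix j assume "j < k" "j \<notin> {}" "(Z(i := Y)) j \<noteq> {}"
  then show "\<exists>q m f. guard_in_place D ((Z(i := Y)) j) q m f (c j) r"
    using assms unfolding guards_in_place_def by (cases "j = i") auto
qed

lemma rank_drops_when_x_guarded:
  assumes chasing: "chasing D Z x i c r" and move: "cops_move c c'"
    and in_place: "guards_in_place D Z c' r {i}" and r: "r \<in> D"
    and guard: "guard_in_place D (Z i \<union> {x}) q m f (c' i) r"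
  shows "catches c' r \<or> (\<forall>r'. moves r r' \<longrightarrow> (\<exists>w'<(card D, b). ranked w' c' r'))"
proof (cases "r = x")
  case True
  then have "c' i = r" using guard by (simp add: guard_in_place_def)
  then show ?thesis using chasing unfolding catches_def chasing_def by blast
next
  case False
  let ?D' = "component_of (D - {x}) E r"
  have "finite D" using chasing finite_vertices finite_subset by (auto simp: chasing_def confined_def)
  moreover have "?D' \<subset> D" using component_of_subset[of "D - {x}" E r] chasing by (auto simp: chasing_def)
  ultimately have smaller: "card ?D' < card D" by (rule psubset_card_mono)
  have "\<forall>j<k. c' j \<in> V" using move by (simp add: cops_move_def)
  then have "settled ?D' (\<lambda>j. (Z(i := Z i \<union> {x})) j \<inter> nbhd ?D') c' r'" if "moves r r'" for r'
    using settled_in_robber_region[OF chasing r False _ guards_in_place_extend[OF in_place guard] that]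
    by blast
  then have "\<exists>b'. ranked (card ?D', b') c' r'" if "moves r r'" for r'
    using ranked_of_settled that by blast
  moreover have "(card ?D', b') < (card D, b)" for b' using smaller by simp
  ultimately show ?thesis by blast
qed

lemma travelling_lowers_rank:
  assumes chasing: "chasing D Z x i c r" and no_duty: "Z i = {}" and walk: "on_walk_to x p L j (c i)"
  shows "can_lower_rank ranked (card D, 1, L - j) c r"
proof -
  define j' where "j' = (if j < L then Suc j else j)"
  have "p j' \<in> V" "moves (c i) (p j')" using walk by (auto simp: on_walk_to_def j'_def moves_iff)
  then obtain c' where move: "cops_move c c'" and ci: "c' i = p j'"
    and in_place: "guards_in_place D Z c' r {i}"
    by (rule chasing_round[OF chasing])
  have "catches c' r \<or> (\<forall>r'. moves r r' \<longrightarrow> (\<exists>w'<(card D, 1, L - j). ranked w' c' r'))"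
  proof (cases "r \<in> D")
    case False
    then show ?thesis using boundary_robber_caught[OF chasing in_place] no_duty by blast
  next
    case rD: True
    show ?thesis
    proof (cases "j < L")
      case True
      then have walk': "on_walk_to x p L (Suc j) (c' i)" using walk ci by (simp add: on_walk_to_def j'_def)
      have "ranked (card D, 1, L - Suc j) c' r'" if "moves r r'" for r'
        using ranked_travelling[OF chasing_after_round[OF chasing move in_place rD that] no_duty walk'] .
      moreover have "(card D, 1::nat, L - Suc j) < (card D, 1::nat, L - j)" using True by simp
      ultimately show ?thesis by blast
    next
      case False
      then have "c' i = x" "x \<in> V" using walk ci by (auto simp: on_walk_to_def j'_def)
      then have "guard_in_place D (Z i \<union> {x}) (\<lambda>_. x) 0 (\<lambda>_. 0) (c' i) r"
        using no_duty by (simp add: guard_in_place_def guarding_walk_def)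
      then show ?thesis using rank_drops_when_x_guarded[OF chasing move in_place rD] by blast
    qed
  qed
  then show ?thesis using move by (rule can_lower_rankI[rotated])
qed

lemma sweep_rank_decreases:
  assumes "fr \<le> Suc fr'" "fr < j"
  shows "sweep_rank m (j - 1) fr' < sweep_rank m j fr"
proof (cases "fr' < j - 1")
  case True
  have "j - 1 - fr' \<le> j - fr" using assms(1) by linarith
  then have "(j - 1 - fr') * (m + 2) \<le> (j - fr) * (m + 2)" by (rule mult_le_mono1)
  then show ?thesis using True assms(2) by (simp add: sweep_rank_def)
qed (use assms(2) in \<open>simp add: sweep_rank_def\<close>)

lemma sweeping_lowers_rank:
  assumes chasing: "chasing D Z x i c r" and duty: "Z i = {z}"
    and approach: "guard_approach D z q m f j (c i) r" and start: "q 0 = x" "f x = 0"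
  shows "can_lower_rank ranked (card D, 0, sweep_rank m j (f r)) c r"
proof -
  have walk: "guarding_walk D q m f" and jm: "j \<le> m" and ci: "c i = q j" and frj: "f r \<le> Suc j"
    and zq: "z = q m" and fz: "f z = m"
    using approach by (auto simp: guard_approach_def)
  have frm: "f r \<le> m" using walk chasing by (auto simp: guarding_walk_def chasing_def confined_def)
  define j' where "j' = max (j - 1) (f r)"
  have "q j' \<in> V \<and> moves (q j) (q j')"
    by (rule guarding_walk_step[OF walk jm]) (use frj frm jm in \<open>auto simp: j'_def\<close>)
  then obtain c' where move: "cops_move c c'" and ci': "c' i = q j'"
    and in_place: "guards_in_place D Z c' r {i}"
    using chasing_round[OF chasing, of "q j'"] unfolding ci by blast
  let ?rank = "(card D, 0::nat, sweep_rank m j (f r))"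
  have "catches c' r \<or> (\<forall>r'. moves r r' \<longrightarrow> (\<exists>w'<?rank. ranked w' c' r'))"
  proof (cases "r \<in> D")
    case False
    have "c' i = r" if "r \<in> Z i" using that duty ci' fz jm zq by (simp add: j'_def)
    then show ?thesis using boundary_robber_caught[OF chasing in_place False] by blast
  next
    case rD: True
    show ?thesis
    proof (cases "f r < j")
      case True
      have "\<exists>w'<?rank. ranked w' c' r'" if "moves r r'" for r'
      proof -
        have lip: "f r' \<le> Suc (f r) \<and> f r \<le> Suc (f r')" using guarding_walk_lipschitz[OF walk rD that] .
        have "guard_approach D z q m f (j - 1) (c' i) r'"
          using walk jm zq fz ci' lip True by (auto simp: guard_approach_def j'_def)
        from ranked_sweeping[OF chasing_after_round[OF chasing move in_place rD that] duty this start]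
        have "ranked (card D, 0, sweep_rank m (j - 1) (f r')) c' r'" .
        moreover have "(card D, 0::nat, sweep_rank m (j - 1) (f r')) < ?rank"
          using sweep_rank_decreases[of "f r" "f r'" j m] lip True by simp
        ultimately show ?thesis by blast
      qed
      then show ?thesis by blast
    next
      case False
      have "guard_in_place D (Z i \<union> {x}) q m f (c' i) r"
        using walk duty zq fz start ci' False frm by (auto simp: guard_in_place_def j'_def)
      then show ?thesis using rank_drops_when_x_guarded[OF chasing move in_place rD] by blast
    qed
  qed
  then show ?thesis using move by (rule can_lower_rankI[rotated])
qed

lemma sweep_from_duty:
  assumes chasing: "chasing D Z x i c r" and duty: "Z i = {z}" and "c i = z"
  shows "\<exists>q m f. guard_approach D z q m f m (c i) r \<and> q 0 = x \<and> f x = 0"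
proof -
  have "confined D Z c r" "x \<in> D" "i < k" using chasing by (auto simp: chasing_def)
  then have D: "D \<subseteq> V" "connected_on D E" and r: "r \<in> closed_nbhd D" and z: "z \<in> nbhd D"
    using duty by (auto simp: confined_def)
  obtain q m f where walk: "guarding_walk D q m f" "q 0 = x" "q m = z" "f x = 0" "f z = m"
    using sweeping_walk[OF D \<open>x \<in> D\<close> z] by blast
  then have "guard_approach D z q m f m (c i) r"
    using r \<open>c i = z\<close> by (auto simp: guard_approach_def guarding_walk_def)
  with walk show ?thesis by blast
qed

text \<open>Having reached his duty \<open>z\<close>, the cop switches to the sweep, which ranks lower.\<close>

lemma approaching_lowers_rank:
  assumes chasing: "chasing D Z x i c r" and duty: "Z i = {z}"
    and approach: "guard_approach D z q m f j (c i) r"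
  shows "can_lower_rank ranked (card D, 1, m - j) c r"
proof (cases "j < m")
  case False
  then have "c i = z" using approach by (simp add: guard_approach_def)
  then obtain q' m' f' where "guard_approach D z q' m' f' m' (c i) r" "q' 0 = x" "f' x = 0"
    using sweep_from_duty[OF chasing duty] by blast
  from sweeping_lowers_rank[OF chasing duty this]
  show ?thesis by (rule can_lower_rank_mono) simp
next
  case True
  have walk: "guarding_walk D q m f" and jm: "j \<le> m" and ci: "c i = q j" and frj: "f r \<le> Suc j"
    and zq: "z = q m" and fz: "f z = m"
    using approach by (auto simp: guard_approach_def)
  have "q (Suc j) \<in> V \<and> moves (q j) (q (Suc j))"
    by (rule guarding_walk_step[OF walk jm]) (use True in auto)
  then obtain c' where move: "cops_move c c'" and ci': "c' i = q (Suc j)"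
    and in_place: "guards_in_place D Z c' r {i}"
    using chasing_round[OF chasing, of "q (Suc j)"] unfolding ci by blast
  have "catches c' r \<or> (\<forall>r'. moves r r' \<longrightarrow> (\<exists>w'<(card D, 1, m - j). ranked w' c' r'))"
  proof (cases "r \<in> D")
    case False
    have "c' i = r" if "r \<in> Z i" using that duty ci' fz frj zq \<open>j < m\<close> by (simp add: le_Suc_eq)
    then show ?thesis using boundary_robber_caught[OF chasing in_place False] by blast
  next
    case rD: True
    have "ranked (card D, 1, m - Suc j) c' r'" if "moves r r'" for r'
    proof -
      have "f r' \<le> Suc (f r)" using guarding_walk_lipschitz[OF walk rD that] by simp
      then have "guard_approach D z q m f (Suc j) (c' i) r'"
        using walk True zq fz ci' frj by (auto simp: guard_approach_def)
      then show ?thesis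
        by (rule ranked_approaching[OF chasing_after_round[OF chasing move in_place rD that] duty])
    qed
    moreover have "(card D, 1::nat, m - Suc j) < (card D, 1::nat, m - j)" using True by simp
    ultimately show ?thesis by blast
  qed
  then show ?thesis using move by (rule can_lower_rankI[rotated])
qed

lemma ranked_lowers_rank:
  assumes "ranked w c r"
  shows "can_lower_rank ranked w c r"
  using assms[unfolded ranked_def]
  by (elim exE conjE disjE; hypsubst)
    (blast intro: travelling_lowers_rank approaching_lowers_rank sweeping_lowers_rank)+

theorem cops_win_decomposition:
  assumes "V \<noteq> {}"
  shows "cops_win V E k"
proof -
  obtain v0 where v0: "v0 \<in> V" using assms by blast
  have "\<exists>n. win_cops_turn n (\<lambda>_. v0) r0" if r0: "r0 \<in> V" for r0
  proof -
    have "nbhd V = {}" by (auto simp: nbhd_def)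
    moreover have "I \<noteq> {}" using tree by (simp add: is_tree_def)
    ultimately have "settled V (\<lambda>_. {}) (\<lambda>_. v0) r0"
      using connected v0 r0 by (auto simp: settled_def confined_def closed_nbhd_def guards_ready_def)
    then obtain w where "ranked w (\<lambda>_. v0) r0" using ranked_of_settled by blast
    then show ?thesis using win_cops_turn_by_ranking[of ranked, OF ranked_lowers_rank] by blast
  qed
  then show ?thesis using cops_win_if_win_cops_turn[of "\<lambda>_. v0"] v0 by blast
qed

end

section \<open>Cop number and treewidth\<close>

lemma restrict_adj_idem: "restrict_adj S (restrict_adj S E) = restrict_adj S E"
  by (auto simp: restrict_adj_def fun_eq_iff)

lemma tree_decomposition_restrict:
  assumes "tree_decomposition V E I F W" "C \<subseteq> V"
  shows "tree_decomposition C (restrict_adj C E) I F (\<lambda>x. W x \<inter> C)"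
proof -
  have "{x\<in>I. a \<in> W x \<inter> C} = {x\<in>I. a \<in> W x}" if "a \<in> C" for a using that by blast
  then show ?thesis using assms by (auto simp: tree_decomposition_def restrict_adj_def)
qed

lemma cop_number_le_of_decomposition:
  assumes simple: "simple_graph V E" and td: "tree_decomposition V E I F W"
    and bags: "\<forall>x\<in>I. card (W x) \<le> 2 * k" and "k \<ge> 1" and "V \<noteq> {}"
  shows "cop_number V E \<le> k"
proof -
  have fin: "finite V" and sym: "\<forall>x y. E x y \<longrightarrow> E y x" using simple by (auto simp: simple_graph_def)
  have "cop_number_conn C (restrict_adj C E) \<le> k" if C: "C \<in> components V E" for C
  proof -
    obtain v where v: "v \<in> V" "C = component_of V E v" using C by (auto simp: components_def)
    have CV: "C \<subseteq> V" unfolding v(2) by (rule component_of_subset)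
    have "simple_graph C (restrict_adj C E)"
      using simple CV finite_subset[OF CV fin] by (auto simp: simple_graph_def restrict_adj_def)
    moreover have "tree_decomposition C (restrict_adj C E) I F (\<lambda>x. W x \<inter> C)"
      using tree_decomposition_restrict[OF td CV] .
    moreover have "connected_on C (restrict_adj C E)"
      using connected_on_component_of[OF sym v(1)] v(2) by (simp add: connected_on_def restrict_adj_idem)
    moreover have "\<forall>x\<in>I. card (W x \<inter> C) \<le> 2 * k"
    proof
      fix x assume "x \<in> I"
      then have "finite (W x)" using td fin finite_subset by (auto simp: tree_decomposition_def)
      then have "card (W x \<inter> C) \<le> card (W x)" by (rule card_mono) blast
      then show "card (W x \<inter> C) \<le> 2 * k" using bags \<open>x \<in> I\<close> by fastforce
    qed
    ultimately have "cops_on_decomposition C (restrict_adj C E) I F (\<lambda>x. W x \<inter> C) k"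
      by (simp add: cops_on_decomposition_def cops_on_decomposition_axioms_def tree_decomp_def)
    moreover have "C \<noteq> {}" using v in_component_of_self by fastforce
    ultimately have "cops_win C (restrict_adj C E) k" by (rule cops_on_decomposition.cops_win_decomposition)
    then show ?thesis unfolding cop_number_conn_def using \<open>k \<ge> 1\<close> by (intro Least_le) simp
  qed
  moreover have "finite (components V E)" "components V E \<noteq> {}"
    using fin \<open>V \<noteq> {}\<close> by (simp_all add: components_def)
  ultimately show ?thesis unfolding cop_number_def by (subst Max_le_iff) auto
qed

lemma int_Least_attained:
  fixes P :: "int \<Rightarrow> bool"
  assumes "P x" and bound: "\<And>x. P x \<Longrightarrow> b \<le> x"
  shows "P (LEAST x. P x)"
proof -
  have "P (b + int (nat (x - b)))" using assms by simp
  then have "\<exists>n. P (b + int n)" ..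
  then have "P (b + int (LEAST n. P (b + int n)))" by (rule LeastI_ex)
  moreover have "(LEAST x. P x) = b + int (LEAST n. P (b + int n))"
  proof (rule Least_equality)
    fix y assume "P y"
    then have "P (b + int (nat (y - b)))" using bound[of y] by simp
    then have "(LEAST n. P (b + int n)) \<le> nat (y - b)" by (rule Least_le)
    then show "b + int (LEAST n. P (b + int n)) \<le> y" using bound[OF \<open>P y\<close>] by linarith
  qed (use calculation in simp)
  ultimately show ?thesis by simp
qed

lemma treewidth_attained:
  assumes "simple_graph V E"
  shows "\<exists>(I::nat set) F W. tree_decomposition V E I F W \<and> treewidth V E = td_width I W"
proof -
  have "tree_decomposition V E {0::nat} (\<lambda>_ _. False) (\<lambda>_. V)"
    using assms by (auto simp: tree_decomposition_def is_tree_def simple_graph_def connected_on_def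
        is_cycle_def restrict_adj_def)
  define P where "P w \<longleftrightarrow> (\<exists>(I::nat set) F W. tree_decomposition V E I F W \<and> w = td_width I W)"
    for w
  then have "P (td_width {0::nat} (\<lambda>_. V))" using \<open>tree_decomposition V E {0::nat} _ _\<close> by blast
  moreover have "-1 \<le> w" if "P w" for w using that by (auto simp: P_def td_width_def)
  ultimately have "P (LEAST w. P w)" by (rule int_Least_attained)
  then show ?thesis by (simp add: P_def treewidth_def)
qed

lemma td_width_bag:
  assumes "tree_decomposition V E I F W" "x \<in> I"
  shows "int (card (W x)) \<le> td_width I W + 1"
proof -
  have "finite I" using assms(1) by (simp add: tree_decomposition_def is_tree_def simple_graph_def)
  then have "card (W x) \<le> Max ((\<lambda>x. card (W x)) ` I)" using assms(2) by (intro Max_ge) auto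
  then show ?thesis by (simp add: td_width_def)
qed

lemma td_width_nonneg:
  assumes "tree_decomposition V E I F W" "finite V" "V \<noteq> {}"
  shows "0 \<le> td_width I W"
proof -
  obtain v x where "x \<in> I" "v \<in> W x" using assms(1,3) by (auto simp: tree_decomposition_def)
  moreover have "finite (W x)"
    using assms(1,2) \<open>x \<in> I\<close> finite_subset by (auto simp: tree_decomposition_def)
  ultimately have "0 < card (W x)" using card_gt_0_iff by blast
  then show ?thesis using td_width_bag[OF assms(1) \<open>x \<in> I\<close>] by linarith
qed

theorem proposition5:
  fixes V :: "'a set" and E :: "'a \<Rightarrow> 'a \<Rightarrow> bool"
  assumes "simple_graph V E" and "V \<noteq> {}"
  shows "real (cop_number V E) \<le> real_of_int (treewidth V E) / 2 + 1"
proof -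
  obtain I :: "nat set" and F W where td: "tree_decomposition V E I F W"
    and tw: "treewidth V E = td_width I W"
    using treewidth_attained[OF assms(1)] by blast
  define k where "k = nat (treewidth V E div 2) + 1"
  have tw_nonneg: "0 \<le> treewidth V E"
    using td_width_nonneg[OF td _ assms(2)] assms(1) tw by (simp add: simple_graph_def)
  have k: "int k = treewidth V E div 2 + 1" using tw_nonneg by (simp add: k_def)
  have "treewidth V E \<le> 2 * (treewidth V E div 2) + 1" by simp
  then have "int (card (W x)) \<le> int (2 * k)" if "x \<in> I" for x
    using td_width_bag[OF td that] tw k by linarith
  then have "\<forall>x\<in>I. card (W x) \<le> 2 * k" by (simp only: of_nat_le_iff) blast
  then have "cop_number V E \<le> k"
    using cop_number_le_of_decomposition[OF assms(1) td _ _ assms(2)] by (simp add: k_def)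
  moreover have "real k \<le> real_of_int (treewidth V E) / 2 + 1"
  proof -
    have "2 * (treewidth V E div 2) \<le> treewidth V E" by simp
    then have "real_of_int (treewidth V E div 2) \<le> real_of_int (treewidth V E) / 2" by linarith
    then show ?thesis using k by (metis of_int_add of_int_of_nat_eq of_int_1 add_le_cancel_right)
  qed
  ultimately show ?thesis by linarith
qed

end
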